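(* Let $d\ge 2$ be an integer and let $SS_d=(S(a_i))_{i\ge1}$ be a degree-system with basis $d$, i.e. a system of grids whose modules are $a_i=d^{k_i}$ with integers $1\le k_1\le k_2\le\cdots$. Let $n\ge1$, $q\ge0$ be integers and put $\alpha=\sum_{i=1}^n 1/a_i$, the density of zeroes of an $n$-filling of the first $n$ grids, and assume $0<\alpha<1$. Then the maximum series with $q$ units satisfies $$msr_n(q)\;<\;\frac{n+q}{1-\alpha}+1,$$ and this estimate is unimprovable.
   Context: A grid $S(a)$ of module $a\in\mathbb N$, $a\ge1$, with shift $k\in\mathbb Z$ is the two-sided sequence $(l_j)_{j\in\mathbb Z}$ of elements of $\{0,1\}$ with $l_j=0$ iff $j\equiv k\pmod a$. The product of grids is their elementwise logical AND. An $n$-filling with modules $a_1,\dots,a_n$ is a product of grids $S(a_1),\dots,S(a_n)$ (with arbitrary shifts) such that omitting any one of the grids changes the product. A system of grids is an infinite sequence of grids with nondecreasing modules $a_1\le a_2\le\cdots$ such that for every $n$ the first $n$ grids form an $n$-filling. In a $0/1$ sequence, a $q$-series is a segment between positions $i<k$ with $l_i=l_k=1$ and exactly $q$ indices $j$ with $i<j<k$ and $l_j=1$; its length is $k-i$. The maximum series $msr_n(q)$ is the supremum, over all $n$-fillings with modules $a_1,\dots,a_n$ (all choices of shifts), of the largest length of a $q$-series in the filling. *)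

theory Defs
  imports Complex_Main "HOL-Library.Extended_Real"
begin

text \<open>0/1 sequences indexed by the integers are modelled as predicates
  \<open>int \<Rightarrow> bool\<close> (True = 1, False = 0).\<close>

definition grid :: "nat \<Rightarrow> int \<Rightarrow> int \<Rightarrow> bool" where
  "grid a k j \<longleftrightarrow> (j - k) mod int a \<noteq> 0"

definition grid_prod :: "nat set \<Rightarrow> (nat \<Rightarrow> nat) \<Rightarrow> (nat \<Rightarrow> int) \<Rightarrow> int \<Rightarrow> bool" where
  "grid_prod I a s j \<longleftrightarrow> (\<forall>i\<in>I. grid (a i) (s i) j)"

definition is_filling :: "nat \<Rightarrow> (nat \<Rightarrow> nat) \<Rightarrow> (nat \<Rightarrow> int) \<Rightarrow> bool" where
  "is_filling n a s \<longleftrightarrow> (\<forall>i\<in>{1..n}. a i \<ge> 1) \<and>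
     (\<forall>i\<in>{1..n}. grid_prod ({1..n} - {i}) a s \<noteq> grid_prod {1..n} a s)"

definition grid_system :: "(nat \<Rightarrow> nat) \<Rightarrow> (nat \<Rightarrow> int) \<Rightarrow> bool" where
  "grid_system a s \<longleftrightarrow> (\<forall>i\<ge>1. 1 \<le> a i \<and> a i \<le> a (Suc i)) \<and> (\<forall>n. is_filling n a s)"

definition degree_system :: "nat \<Rightarrow> (nat \<Rightarrow> nat) \<Rightarrow> (nat \<Rightarrow> int) \<Rightarrow> bool" where
  "degree_system d a s \<longleftrightarrow> grid_system a s \<and>
     (\<exists>k :: nat \<Rightarrow> nat. \<forall>i\<ge>1. a i = d ^ k i \<and> 1 \<le> k i \<and> k i \<le> k (Suc i))"

definition q_series :: "(int \<Rightarrow> bool) \<Rightarrow> nat \<Rightarrow> int \<Rightarrow> int \<Rightarrow> bool" where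
  "q_series l q i k \<longleftrightarrow> i < k \<and> l i \<and> l k \<and> card {j. i < j \<and> j < k \<and> l j} = q"

definition msr :: "nat \<Rightarrow> (nat \<Rightarrow> nat) \<Rightarrow> nat \<Rightarrow> ereal" where
  "msr n a q = Sup {ereal (real_of_int (k - i)) | s i k.
       is_filling n a s \<and> q_series (grid_prod {1..n} a s) q i k}"

end

theory Submission
  imports Defs
begin

text \<open>Inside a \<open>q\<close>-series of length \<open>L\<close> the \<open>L - 1\<close> interior positions carry \<open>q\<close> ones and
  \<open>L - 1 - q\<close> zeroes, while a grid of module \<open>a\<close> has at most \<open>(L - 2) / a + 1\<close> zeroes there.
  Hence \<open>L - 1 - q \<le> \<alpha> (L - 2) + n\<close>, i.e. \<open>L \<le> (n + q + 1 - 2 \<alpha>) / (1 - \<alpha>)\<close>, which is below the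
  claimed bound since \<open>\<alpha> > 0\<close>; only the positivity of the modules is used.
  For sharpness take the modules \<open>d ^ (K + i)\<close> with the zeroes of the first \<open>n\<close> grids at
  \<open>1, \<dots>, n\<close>: once \<open>d ^ K > n + q\<close> the positions \<open>0\<close> and \<open>n + q + 1\<close> bound a \<open>q\<close>-series of
  length \<open>n + q + 1\<close>, and \<open>\<alpha> \<rightarrow> 0\<close> as \<open>K \<rightarrow> \<infinity>\<close>.\<close>

lemma card_grid_zeros_between:
  fixes i k s :: int
  assumes "1 \<le> a" and "i < k"
  shows "real (card {j. i < j \<and> j < k \<and> \<not> grid a s j}) \<le> real_of_int (k - i - 2) / real a + 1"
proof -
  let ?Z = "{j. i < j \<and> j < k \<and> \<not> grid a s j}"
  define h where "h j = (j - i - 1) div int a" for j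
  have a: "int a > 0" using assms(1) by simp
  \<comment> \<open>two zeros of the grid are congruent modulo a, so h separates them\<close>
  have "inj_on h ?Z"
  proof (rule inj_onI)
    fix x y assume "x \<in> ?Z" "y \<in> ?Z" "h x = h y"
    then have "int a dvd x - s" "int a dvd y - s"
      by (simp_all add: grid_def mod_0_imp_dvd)
    then have "int a dvd (x - s) - (y - s)"
      by (rule dvd_diff)
    then have "(x - i - 1) mod int a = (y - i - 1) mod int a"
      by (simp add: mod_eq_dvd_iff)
    with \<open>h x = h y\<close> have "(x - i - 1) div int a * int a + (x - i - 1) mod int a
        = (y - i - 1) div int a * int a + (y - i - 1) mod int a"
      unfolding h_def by simp
    then show "x = y" by simp
  qed
  moreover have "h ` ?Z \<subseteq> {0..(k - i - 2) div int a}"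
  proof
    fix y assume "y \<in> h ` ?Z"
    then obtain j where "i < j" "j < k" "y = h j" by auto
    then show "y \<in> {0..(k - i - 2) div int a}"
      using a by (simp add: h_def div_int_pos_iff zdiv_mono1)
  qed
  ultimately have "card ?Z \<le> card {0..(k - i - 2) div int a}"
    by (metis card_image card_mono finite_atLeastAtMost_int)
  also have "\<dots> = nat ((k - i - 2) div int a + 1)" by simp
  finally have "real (card ?Z) \<le> max 0 (real_of_int ((k - i - 2) div int a) + 1)" by linarith
  moreover have "real_of_int ((k - i - 2) div int a) \<le> real_of_int (k - i - 2) / real a"
    by (metis floor_divide_of_int_eq of_int_floor_le of_int_of_nat_eq)
  moreover have "0 \<le> real_of_int (k - i - 2) / real a + 1"
    using assms by (simp add: field_simps)
  ultimately show ?thesis by linarith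
qed

lemma q_series_length_bound:
  assumes a: "\<forall>t\<in>{1..n}. 1 \<le> a t" and series: "q_series (grid_prod {1..n} a s) q i k"
  shows "real_of_int (k - i) - 1 - real q
           \<le> (\<Sum>t=1..n. 1 / real (a t)) * real_of_int (k - i - 2) + real n"
proof -
  let ?l = "grid_prod {1..n} a s"
  let ?ones = "{j. i < j \<and> j < k \<and> ?l j}" and ?zeros = "{j. i < j \<and> j < k \<and> \<not> ?l j}"
  let ?Z = "\<lambda>t. {j. i < j \<and> j < k \<and> \<not> grid (a t) (s t) j}"
  have ik: "i < k" and q: "card ?ones = q" using series by (auto simp: q_series_def)
  have fin: "finite ?ones" "finite ?zeros"
    by (rule finite_subset[of _ "{i<..<k}"]; force)+
  have "{i<..<k} = ?ones \<union> ?zeros" by auto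
  then have "card {i<..<k} = q + card ?zeros"
    using q fin by (simp add: card_Un_disjoint disjoint_iff)
  then have length: "real_of_int (k - i) - 1 - real q = real (card ?zeros)" using ik by simp
  have "card ?zeros \<le> card (\<Union>t\<in>{1..n}. ?Z t)"
  proof (rule card_mono)
    show "finite (\<Union>t\<in>{1..n}. ?Z t)"
      by (rule finite_subset[of _ "{i<..<k}"]) auto
    show "?zeros \<subseteq> (\<Union>t\<in>{1..n}. ?Z t)"
      unfolding grid_prod_def by blast
  qed
  also have "\<dots> \<le> (\<Sum>t=1..n. card (?Z t))" by (rule card_UN_le) simp
  finally have "real (card ?zeros) \<le> (\<Sum>t=1..n. real (card (?Z t)))"
    by (simp flip: of_nat_sum)
  also have "\<dots> \<le> (\<Sum>t=1..n. real_of_int (k - i - 2) / real (a t) + 1)"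
    using a ik by (intro sum_mono card_grid_zeros_between) auto
  also have "\<dots> = (\<Sum>t=1..n. 1 / real (a t)) * real_of_int (k - i - 2) + real n"
    by (simp add: sum.distrib sum_distrib_right)
  finally show ?thesis using length by simp
qed

lemma msr_less:
  assumes "0 < (\<Sum>i=1..n. 1 / real (a i))" and "(\<Sum>i=1..n. 1 / real (a i)) < 1"
  shows "msr n a q < ereal ((real n + real q) / (1 - (\<Sum>i=1..n. 1 / real (a i))) + 1)"
proof -
  define \<alpha> where "\<alpha> = (\<Sum>i=1..n. 1 / real (a i))"
  have \<alpha>: "0 < \<alpha>" "\<alpha> < 1" using assms by (simp_all add: \<alpha>_def)
  define B where "B = (real n + real q + 1 - 2 * \<alpha>) / (1 - \<alpha>)"
  have "real_of_int (k - i) \<le> B"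
    if "is_filling n a s" and "q_series (grid_prod {1..n} a s) q i k" for s i k
  proof -
    have "\<forall>t\<in>{1..n}. 1 \<le> a t" using that(1) by (simp add: is_filling_def)
    then have "real_of_int (k - i) - 1 - real q \<le> \<alpha> * (real_of_int (k - i) - 2) + real n"
      using q_series_length_bound that(2) by (simp add: \<alpha>_def)
    then have "real_of_int (k - i) * (1 - \<alpha>) \<le> real n + real q + 1 - 2 * \<alpha>"
      by (simp add: algebra_simps)
    then show ?thesis using \<alpha> by (simp add: B_def field_simps)
  qed
  then have "msr n a q \<le> ereal B"
    unfolding msr_def by (auto intro!: Sup_least)
  also have "B < (real n + real q) / (1 - \<alpha>) + 1"
    using \<alpha> by (simp add: B_def field_simps)
  finally show ?thesis by (simp add: \<alpha>_def)
qed

lemma grid_of_small_distance: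
  fixes x y :: int
  assumes "0 < \<bar>x - y\<bar>" and "\<bar>x - y\<bar> < int a"
  shows "grid a y x"
  using assms dvd_imp_le_int[of "x - y" "int a"] by (auto simp: grid_def dvd_eq_mod_eq_0)

lemma grid_of_multiple:
  fixes x y :: int
  assumes "int a dvd x" and "\<not> int a dvd y"
  shows "grid a y x"
  using assms dvd_diff[of "int a" x "x - y"] by (auto simp: grid_def dvd_eq_mod_eq_0)

lemma is_filling_if_private_zeros:
  assumes "\<forall>i\<in>{1..n}. 1 \<le> a i"
    and "\<forall>i\<in>{1..n}. \<forall>t\<in>{1..n}. t \<noteq> i \<longrightarrow> grid (a t) (s t) (s i)"
  shows "is_filling n a s"
  unfolding is_filling_def
proof (intro conjI ballI)
  fix i assume i: "i \<in> {1..n}"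
  have "grid_prod ({1..n} - {i}) a s (s i)" "\<not> grid_prod {1..n} a s (s i)"
    using assms(2) i by (auto simp: grid_prod_def grid_def intro!: bexI[of _ i])
  then show "grid_prod ({1..n} - {i}) a s \<noteq> grid_prod {1..n} a s" by metis
qed (use assms(1) in blast)

text \<open>Grid \<open>i > n\<close> puts its zero at \<open>d ^ (K + i - 1)\<close>, a multiple of every smaller module but
  not of its own, so that every grid keeps a zero no other grid covers.\<close>

definition block_shifts :: "nat \<Rightarrow> nat \<Rightarrow> nat \<Rightarrow> nat \<Rightarrow> int" where
  "block_shifts d K n i = (if i \<le> n then int i else int (d ^ (K + i - 1)))"

lemma strict_mono_block_shifts:
  assumes "2 \<le> d" and "n < d ^ K"
  shows "strict_mono (block_shifts d K n)"
  unfolding strict_mono_Suc_iff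
proof
  fix i
  have "d ^ K \<le> d ^ (K + n)" using assms(1) by (simp add: power_increasing)
  then have "n < d ^ (K + n)" using assms(2) by linarith
  moreover have "d ^ (K + i - 1) < d ^ (K + i)" if "n < i" using assms that by simp
  ultimately show "block_shifts d K n i < block_shifts d K n (Suc i)"
    by (auto simp: block_shifts_def not_le le_Suc_eq le_less_Suc_eq simp del: of_nat_power)
qed

lemma block_shifts_less_module:
  assumes "2 \<le> d" and "n < d ^ K"
  shows "block_shifts d K n i < int (d ^ (K + i))"
proof (cases "i \<le> n")
  case True
  have "d ^ K \<le> d ^ (K + i)" using assms(1) by (simp add: power_increasing)
  with True assms(2) show ?thesis by (simp add: block_shifts_def del: of_nat_power)
next
  case False
  then have "d ^ (K + i - 1) < d ^ (K + i)" using assms(1) by simp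
  with False show ?thesis by (simp add: block_shifts_def del: of_nat_power)
qed

lemma block_shifts_private_zeros:
  assumes d: "2 \<le> d" and n: "n < d ^ K" and "1 \<le> i" "1 \<le> t" "t \<noteq> i"
  shows "grid (d ^ (K + t)) (block_shifts d K n t) (block_shifts d K n i)"
proof -
  let ?s = "block_shifts d K n"
  have mono: "strict_mono ?s" using d n by (rule strict_mono_block_shifts)
  have pos: "0 < ?s j" if "1 \<le> j" for j
    using strict_monoD[OF mono, of 0 j] that by (simp add: block_shifts_def)
  have st: "?s t < int (d ^ (K + t))" using d n by (rule block_shifts_less_module)
  show ?thesis
  proof (cases "n < i \<and> t < i")
    case True
    then have "d ^ (K + t) dvd d ^ (K + i - 1)" by (intro le_imp_power_dvd) auto
    then have "int (d ^ (K + t)) dvd ?s i"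
      using True by (simp add: block_shifts_def del: of_nat_power)
    moreover have "\<not> int (d ^ (K + t)) dvd ?s t"
      using zdvd_imp_le[OF _ pos] st \<open>1 \<le> t\<close> by fastforce
    ultimately show ?thesis by (rule grid_of_multiple)
  next
    case False
    have "?s i < int (d ^ (K + t))"
    proof (cases "i \<le> n")
      case True
      have "d ^ K \<le> d ^ (K + t)" using d by (simp add: power_increasing)
      with True n show ?thesis by (simp add: block_shifts_def del: of_nat_power)
    next
      case False
      with \<open>\<not> (n < i \<and> t < i)\<close> \<open>t \<noteq> i\<close> have "i < t" by simp
      with st show ?thesis using strict_monoD[OF mono] by fastforce
    qed
    moreover have "?s i \<noteq> ?s t" using strict_mono_eq[OF mono] \<open>t \<noteq> i\<close> by simp
    ultimately show ?thesis
      using pos[OF \<open>1 \<le> i\<close>] pos[OF \<open>1 \<le> t\<close>] st by (intro grid_of_small_distance) auto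
  qed
qed

lemma degree_system_block_shifts:
  assumes "2 \<le> d" and "n < d ^ K"
  shows "degree_system d (\<lambda>i. d ^ (K + i)) (block_shifts d K n)"
proof -
  have "is_filling m (\<lambda>i. d ^ (K + i)) (block_shifts d K n)" for m
    using assms block_shifts_private_zeros by (intro is_filling_if_private_zeros) auto
  moreover have "d ^ (K + i) \<le> d ^ (K + Suc i)" for i
    using assms(1) by (simp add: power_increasing)
  ultimately show ?thesis
    unfolding degree_system_def grid_system_def using assms(1)
    by (auto intro!: exI[of _ "\<lambda>i. K + i"])
qed

lemma block_filling_zeros:
  assumes d: "2 \<le> d" and nq: "n + q < d ^ K" and j: "0 \<le> j" "j \<le> int (n + q + 1)"
  shows "grid_prod {1..n} (\<lambda>i. d ^ (K + i)) (block_shifts d K n) j \<longleftrightarrow> \<not> (1 \<le> j \<and> j \<le> int n)"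
proof -
  have "grid (d ^ (K + t)) (int t) j \<longleftrightarrow> j \<noteq> int t" if "t \<in> {1..n}" for t
  proof
    assume "j \<noteq> int t"
    moreover have "d ^ K \<le> d ^ (K + t)" using d by (simp add: power_increasing)
    then have "int (n + q) < int (d ^ (K + t))" using nq by linarith
    ultimately show "grid (d ^ (K + t)) (int t) j"
      using that j by (intro grid_of_small_distance) (auto simp del: of_nat_power)
  qed (auto simp: grid_def)
  then have "grid_prod {1..n} (\<lambda>i. d ^ (K + i)) (block_shifts d K n) j \<longleftrightarrow> (\<forall>t\<in>{1..n}. j \<noteq> int t)"
    by (simp add: grid_prod_def block_shifts_def)
  also have "\<dots> \<longleftrightarrow> j \<notin> int ` {1..n}" by blast
  also have "\<dots> \<longleftrightarrow> \<not> (1 \<le> j \<and> j \<le> int n)" by (simp add: image_int_atLeastAtMost)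
  finally show ?thesis .
qed

lemma msr_block_shifts_ge:
  assumes "2 \<le> d" and "n + q < d ^ K"
  shows "ereal (real n + real q + 1) \<le> msr n (\<lambda>i. d ^ (K + i)) q"
proof -
  let ?a = "\<lambda>i. d ^ (K + i)" and ?s = "block_shifts d K n"
  have zeros: "grid_prod {1..n} ?a ?s j \<longleftrightarrow> \<not> (1 \<le> j \<and> j \<le> int n)"
    if "0 \<le> j" "j \<le> int (n + q + 1)" for j
    using block_filling_zeros[OF assms that] .
  have "{j. 0 < j \<and> j < int (n + q + 1) \<and> grid_prod {1..n} ?a ?s j} = {int n + 1 .. int n + int q}"
    using zeros by auto
  then have "q_series (grid_prod {1..n} ?a ?s) q 0 (int (n + q + 1))"
    using zeros by (simp add: q_series_def)
  moreover have "is_filling n ?a ?s"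
    using degree_system_block_shifts assms by (fastforce simp: degree_system_def grid_system_def)
  ultimately show ?thesis
    unfolding msr_def by (intro Sup_upper) force
qed

lemma block_density_tendsto_0:
  assumes "2 \<le> d"
  shows "(\<lambda>K. \<Sum>i=1..n. 1 / real (d ^ (K + i))) \<longlonglongrightarrow> 0"
proof -
  have "(\<lambda>K. inverse (real d ^ (K + i))) \<longlonglongrightarrow> 0" for i
    using LIMSEQ_ignore_initial_segment[OF LIMSEQ_inverse_realpow_zero] assms by simp
  then have "(\<lambda>K. \<Sum>i=1..n. inverse (real d ^ (K + i))) \<longlonglongrightarrow> (\<Sum>i=1..n. 0)"
    by (intro tendsto_sum)
  then show ?thesis by (simp add: divide_inverse)
qed

lemma eventually_less_power:
  fixes d m :: nat
  assumes "2 \<le> d"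
  shows "eventually (\<lambda>K. m < d ^ K) sequentially"
  using eventually_gt_at_top[of m]
proof eventually_elim
  case (elim K)
  have "K < 2 ^ K" by (rule less_exp)
  also have "(2::nat) ^ K \<le> d ^ K" using assms by (rule power_mono) simp
  finally show ?case using elim by simp
qed

lemma msr_bound_sharp:
  fixes \<epsilon> :: real
  assumes "2 \<le> d" and "0 < \<epsilon>"
  shows "\<exists>a s. degree_system d a s \<and> (\<Sum>i=1..n. 1 / real (a i)) < 1 \<and>
           ereal ((real n + real q) / (1 - (\<Sum>i=1..n. 1 / real (a i))) + 1 - \<epsilon>) < msr n a q"
proof -
  define \<alpha> where "\<alpha> K = (\<Sum>i=1..n. 1 / real (d ^ (K + i)))" for K
  have \<alpha>: "\<alpha> \<longlonglongrightarrow> 0" unfolding \<alpha>_def using assms(1) by (rule block_density_tendsto_0)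
  then have "(\<lambda>K. (real n + real q) / (1 - \<alpha> K) + 1 - \<epsilon>) \<longlonglongrightarrow> (real n + real q) / (1 - 0) + 1 - \<epsilon>"
    by (intro tendsto_intros) auto
  then have "eventually (\<lambda>K. (real n + real q) / (1 - \<alpha> K) + 1 - \<epsilon> < real n + real q + 1) sequentially"
    using assms(2) by (intro order_tendstoD(2)) auto
  moreover have "eventually (\<lambda>K. \<alpha> K < 1) sequentially"
    using \<alpha> by (intro order_tendstoD(2)) auto
  moreover have "eventually (\<lambda>K. n + q < d ^ K) sequentially"
    using assms(1) by (rule eventually_less_power)
  ultimately obtain K where K: "(real n + real q) / (1 - \<alpha> K) + 1 - \<epsilon> < real n + real q + 1"
    "\<alpha> K < 1" "n + q < d ^ K"
    by (metis (mono_tags, lifting) eventually_conj eventually_happens' sequentially_bot)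
  have "ereal ((real n + real q) / (1 - \<alpha> K) + 1 - \<epsilon>) < ereal (real n + real q + 1)"
    using K(1) by simp
  also have "\<dots> \<le> msr n (\<lambda>i. d ^ (K + i)) q"
    using assms(1) K(3) by (rule msr_block_shifts_ge)
  finally have "ereal ((real n + real q) / (1 - \<alpha> K) + 1 - \<epsilon>) < msr n (\<lambda>i. d ^ (K + i)) q" .
  moreover have "degree_system d (\<lambda>i. d ^ (K + i)) (block_shifts d K n)"
    using assms(1) K(3) by (intro degree_system_block_shifts) auto
  ultimately show ?thesis using K(2) unfolding \<alpha>_def by blast
qed

theorem theorem2:
  shows "(\<forall>(d::nat) a s (n::nat) (q::nat).
            d \<ge> 2 \<longrightarrow> degree_system d a s \<longrightarrow> n \<ge> 1 \<longrightarrow>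
            0 < (\<Sum>i=1..n. 1 / real (a i)) \<longrightarrow> (\<Sum>i=1..n. 1 / real (a i)) < 1 \<longrightarrow>
            msr n a q < ereal ((real n + real q) / (1 - (\<Sum>i=1..n. 1 / real (a i))) + 1))
       \<and> (\<forall>(d::nat) (n::nat) (q::nat) (\<epsilon>::real).
            d \<ge> 2 \<longrightarrow> n \<ge> 1 \<longrightarrow> \<epsilon> > 0 \<longrightarrow>
            (\<exists>a s. degree_system d a s \<and> (\<Sum>i=1..n. 1 / real (a i)) < 1 \<and>
               msr n a q > ereal ((real n + real q) / (1 - (\<Sum>i=1..n. 1 / real (a i))) + 1 - \<epsilon>)))"
  using msr_less msr_bound_sharp by blast

end
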